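(* The Minimmit protocol (described in the context) satisfies Consistency: in every execution, if $p_i$ and $p_j$ are correct, then for any timeslots $t$ and $t'$, $\text{log}_i(t)$ and $\text{log}_j(t')$ are compatible, i.e. one is a prefix of the other.
   Context: Setting. There are $n$ processors $\Pi=\{p_0,\dots,p_{n-1}\}$ and an integer $f$ with $5f+1\le n$. At most $f$ processors may be corrupted by an adversary during the execution and then behave arbitrarily (Byzantine); processors never corrupted are called correct. Processors communicate over point-to-point authenticated channels; every message is signed by its sender; a PKI validates signatures and $H$ is a collision-resistant hash function; attention is restricted to executions in which the adversary cannot forge signatures or find hash collisions. Time is divided into timeslots $t\in\mathbb{N}_{\ge 0}$ (partial synchrony): a message sent at time $t$ arrives at some time $t'>t$ with $t'\le \max\{\text{GST},t\}+\Delta$, where $\Delta$ is known to the protocol and GST is unknown and chosen by the adversary (who also chooses delivery times subject to this constraint). Clocks of correct processors advance in real time. When a correct processor sends a message to all processors, it regards that message as immediately received by itself. Transactions are unique messages signed by the environment; each timeslot each processor may receive a finite set of transactions. Each processor $p_i$ maintains an append-only log $\text{log}_i$ of distinct transactions, $\text{log}_i(t)$ denoting its value at the end of timeslot $t$. Blocks. $\text{lead}(v):=p_j$ with $j=v \bmod n$. The genesis block is $b_{\text{gen}}=(0,\lambda,\lambda)$ ($\lambda$ the empty sequence), considered finalised at the start. Any other block is a tuple $b=(v,\text{Tr},h)$ signed by $\text{lead}(v)$, with $v\in\mathbb{N}_{\ge1}$ ($b.\text{view}=v$, "a view $v$ block"), $\text{Tr}=b.\text{Tr}$ a sequence of distinct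 transactions, and $h=b.h$ a hash value; its parent is the block $b'$ with $H(b')=h$. The ancestors of $b$ are $b$ and the ancestors of its parent ($b_{\text{gen}}$ has only itself). Two blocks are inconsistent if neither is an ancestor of the other. To finalise $b$ means: upon obtaining all ancestors of $b$, the processor sets its log to extend the concatenation of $b'.\text{Tr}$ over ancestors $b'$ of $b$ (with duplicates removed). Messages. A vote for $b$ is $(\text{vote},b)$. An M-notarization for $b$ is a set of $2f+1$ votes for $b$ signed by distinct processors; an L-notarization for $b$ is a set of $n-f$ votes for $b$ signed by distinct processors. A nullify$(v)$ message is $(\text{nullify},v)$; a nullification for view $v$ is a set of $2f+1$ nullify$(v)$ messages signed by distinct processors. Local state of each processor: $\mathtt{S}$, the set of all received messages (automatically updated; it contains a block $b$ if it contains any message having $b$ as an entry; initially it contains only $b_{\text{gen}}$ and an M- and L-notarization for $b_{\text{gen}}$); the current view $\mathtt{v}$ (initially 1; a processor enters view $v$ when $\mathtt{v}$ becomes $v$); a timer $\mathtt{T}$ (initially 0, increasing in real time, reset to 0 upon entering a new view); $\mathtt{nullified}$ (initially false) and $\mathtt{notarized}$ (initially $\bot$, a value different from every block). SelectParent$(\mathtt{S},\mathtt{v})$: let $v'<\mathtt{v}$ be greatest such that $\mathtt{S}$ contains an M-notarization for some block of view $v'$; output the lexicographically least such block. ProposeChild$(b,v)$: form a sequence Tr of distinct transactions containing all transactions received and not in $b'.\text{Tr}$ for any ancestor $b'\in\mathtt{S}$ of $b$, and send the block $(v,\text{Tr},H(b))$ to all processors. $\mathtt{S}$ contains a valid proposal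 $b$ for view $v$ if $\mathtt{S}$ contains (i) precisely one block of the form $b=(v,\text{Tr},h)$ signed by $\text{lead}(v)$, (ii) an M-notarization for some $b'$ with $H(b')=h$, say $b'.\text{view}=v'$, and (iii) a nullification for each view in the open interval $(v',v)$. At timeslot $t$ a nullification $N\subseteq\mathtt{S}$ for a view $v$ is new if $\mathtt{S}$ contained no nullification for $v$ at any earlier timeslot and $N$ is lexicographically least among nullifications for $v$ in $\mathtt{S}$; new M-notarizations and new L-notarizations for a block $b$ are defined analogously. Protocol (Minimmit): at every timeslot, correct $p_i$ does, in order: (1) send new nullifications in $\mathtt{S}$ to all processors; (2) send new M- and L-notarizations in $\mathtt{S}$ to all; (3) if $p_i=\text{lead}(\mathtt{v})$, execute ProposeChild(SelectParent$(\mathtt{S},\mathtt{v}),\mathtt{v})$; (4) if $\mathtt{S}$ contains a valid proposal $b$ for view $\mathtt{v}$ and $\mathtt{notarized}=\bot$ and $\mathtt{nullified}=$ false, set $\mathtt{notarized}:=b$ and send $(\text{vote},b)$ to all; (5) if $\mathtt{T}=2\Delta$, $\mathtt{nullified}=$ false and $\mathtt{notarized}=\bot$, set $\mathtt{nullified}:=$ true and send $(\text{nullify},\mathtt{v})$ to all; (6) if $\mathtt{S}$ contains a nullification for $\mathtt{v}$, set $\mathtt{v}:=\mathtt{v}+1$, $\mathtt{nullified}:=$ false, $\mathtt{notarized}:=\bot$; (7) if $\mathtt{S}$ contains an M-notarization for some $b$ with $b.\text{view}=\mathtt{v}$: if $\mathtt{notarized}=\bot$ and $\mathtt{nullified}=$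 false send $(\text{vote},b)$ to all; then set $\mathtt{v}:=\mathtt{v}+1$, $\mathtt{nullified}:=$ false, $\mathtt{notarized}:=\bot$; (8) if $\mathtt{nullified}=$ false, $\mathtt{notarized}\neq\bot$, and $\mathtt{S}$ contains at least $2f+1$ messages signed by distinct processors, each either $(\text{nullify},\mathtt{v})$ or $(\text{vote},b)$ for some $b$ with $b.\text{view}=\mathtt{v}$ and $b\ne\mathtt{notarized}$, then set $\mathtt{nullified}:=$ true and send $(\text{nullify},\mathtt{v})$ to all; (9) if $\mathtt{S}$ contains a new L-notarization for a block $b$, finalise $b$. The logs of correct processors change only through finalisation. *)

theory Defs
  imports Main "HOL-Library.Product_Lexorder" "HOL-Library.List_Lexorder"
          "HOL-Library.Option_ord" "HOL-Library.Sublist"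
begin

text \<open>Hash values have type 'h; the genesis block
  has the empty sequence as hash field, modelled by None; every other block carries
  Some h.  Orders on 't and 'h give the lexicographic order on blocks
  (product / list / option lexicographic orders from HOL-Library).\<close>

type_synonym ('t,'h) block = "nat \<times> 't list \<times> 'h option"

definition bview :: "('t,'h) block \<Rightarrow> nat" where "bview b = fst b"
definition btr :: "('t,'h) block \<Rightarrow> 't list" where "btr b = fst (snd b)"
definition bh :: "('t,'h) block \<Rightarrow> 'h option" where "bh b = snd (snd b)"

definition gen :: "('t,'h) block" where "gen = (0, [], None)"

definition lead :: "nat \<Rightarrow> nat \<Rightarrow> nat" where "lead n v = v mod n"

text \<open>Primitive signed messages: (signer, content).  A notarization / nullification is a
  set of such votes / nullify messages; forwarding it means sending its members.\<close>

datatype ('t,'h) msg = Prop "('t,'h) block" | Vote "('t,'h) block" | Null nat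

type_synonym ('t,'h) atom = "nat \<times> ('t,'h) msg"

definition valid_block :: "('t,'h) block \<Rightarrow> bool" where
  "valid_block b \<longleftrightarrow> b = gen \<or> (1 \<le> bview b \<and> bh b \<noteq> None)"

text \<open>Signature validity (checked via the PKI): signer is a processor, a block
  message is signed by the leader of its view.\<close>
definition valid_atom :: "nat \<Rightarrow> ('t,'h) atom \<Rightarrow> bool" where
  "valid_atom n a \<longleftrightarrow> fst a < n \<and>
     (case snd a of
        Prop b \<Rightarrow> valid_block b \<and> b \<noteq> gen \<and> fst a = lead n (bview b)
      | Vote b \<Rightarrow> valid_block b
      | Null v \<Rightarrow> True)"

text \<open>All signatures carried by a message: its own, and the leader's signature on the
  block it mentions (if not genesis).\<close>
definition sigs :: "nat \<Rightarrow> ('t,'h) atom \<Rightarrow> ('t,'h) atom set" where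
  "sigs n a = {a} \<union>
     (case snd a of
        Prop b \<Rightarrow> (if b = gen then {} else {(lead n (bview b), Prop b)})
      | Vote b \<Rightarrow> (if b = gen then {} else {(lead n (bview b), Prop b)})
      | Null v \<Rightarrow> {})"

definition blocks :: "('t,'h) atom set \<Rightarrow> ('t,'h) block set" where
  "blocks S = {gen} \<union> {b. \<exists>j. (j, Prop b) \<in> S \<or> (j, Vote b) \<in> S}"

definition voters :: "('t,'h) atom set \<Rightarrow> ('t,'h) block \<Rightarrow> nat set" where
  "voters S b = {j. (j, Vote b) \<in> S}"

definition nullers :: "('t,'h) atom set \<Rightarrow> nat \<Rightarrow> nat set" where
  "nullers S v = {j. (j, Null v) \<in> S}"

definition hasM :: "nat \<Rightarrow> ('t,'h) atom set \<Rightarrow> ('t,'h) block \<Rightarrow> bool" where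
  "hasM f S b \<longleftrightarrow> (\<exists>Q \<subseteq> voters S b. card Q = 2*f+1)"

definition hasL :: "nat \<Rightarrow> nat \<Rightarrow> ('t,'h) atom set \<Rightarrow> ('t,'h) block \<Rightarrow> bool" where
  "hasL n f S b \<longleftrightarrow> (\<exists>Q \<subseteq> voters S b. card Q = n - f)"

definition hasNull :: "nat \<Rightarrow> ('t,'h) atom set \<Rightarrow> nat \<Rightarrow> bool" where
  "hasNull f S v \<longleftrightarrow> (\<exists>Q \<subseteq> nullers S v. card Q = 2*f+1)"

definition lexmin :: "nat \<Rightarrow> nat set \<Rightarrow> nat set" where
  "lexmin k A = (THE Q. Q \<subseteq> A \<and> card Q = k \<and>
     (\<forall>Q'. Q' \<subseteq> A \<and> card Q' = k \<longrightarrow> sorted_list_of_set Q \<le> sorted_list_of_set Q'))"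

text \<open>Messages sent in steps (1) and (2): new nullifications and new M-/L-notarizations.
  S0 is the set S at the end of the previous timeslot, S1 the current one.\<close>
definition new_msgs :: "nat \<Rightarrow> nat \<Rightarrow> ('t,'h) atom set \<Rightarrow> ('t,'h) atom set \<Rightarrow> ('t,'h) atom set" where
  "new_msgs n f S0 S1 =
     {(j, Null v) | j v. hasNull f S1 v \<and> \<not> hasNull f S0 v \<and> j \<in> lexmin (2*f+1) (nullers S1 v)}
   \<union> {(j, Vote b) | j b. hasM f S1 b \<and> \<not> hasM f S0 b \<and> j \<in> lexmin (2*f+1) (voters S1 b)}
   \<union> {(j, Vote b) | j b. hasL n f S1 b \<and> \<not> hasL n f S0 b \<and> j \<in> lexmin (n-f) (voters S1 b)}"

inductive_set anc :: "(('t,'h) block \<Rightarrow> 'h) \<Rightarrow> ('t,'h) block \<Rightarrow> ('t,'h) block set"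
  for H :: "('t,'h) block \<Rightarrow> 'h" and b :: "('t,'h) block" where
  self: "b \<in> anc H b"
| parent: "c \<in> anc H b \<Longrightarrow> c \<noteq> gen \<Longrightarrow> bh c = Some (H p) \<Longrightarrow> p \<in> anc H b"

definition select_parent :: "nat \<Rightarrow> ('t::linorder,'h::linorder) atom set \<Rightarrow> nat \<Rightarrow> ('t,'h) block" where
  "select_parent f S v =
     (let v' = (GREATEST v'. v' < v \<and> (\<exists>b \<in> blocks S. bview b = v' \<and> hasM f S b))
      in LEAST b. b \<in> blocks S \<and> bview b = v' \<and> hasM f S b)"

definition valid_proposal :: "nat \<Rightarrow> (('t,'h) block \<Rightarrow> 'h) \<Rightarrow> ('t,'h) atom set \<Rightarrow> nat \<Rightarrow> ('t,'h) block \<Rightarrow> bool" where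
  "valid_proposal f H S v b \<longleftrightarrow>
     b \<in> blocks S \<and> bview b = v \<and> (\<forall>b' \<in> blocks S. bview b' = v \<longrightarrow> b' = b) \<and>
     (\<exists>b'. bh b = Some (H b') \<and> hasM f S b' \<and> (\<forall>w. bview b' < w \<and> w < v \<longrightarrow> hasNull f S w))"

definition fchain :: "(('t,'h) block \<Rightarrow> 'h) \<Rightarrow> ('t,'h) atom set \<Rightarrow> ('t,'h) block \<Rightarrow> ('t,'h) block list \<Rightarrow> bool" where
  "fchain H S b bs \<longleftrightarrow> bs \<noteq> [] \<and> hd bs = gen \<and> last bs = b \<and> set bs \<subseteq> blocks S \<and>
     (\<forall>k. Suc k < length bs \<longrightarrow> bh (bs ! Suc k) = Some (H (bs ! k)))"

text \<open>Concatenation with duplicates removed (first occurrences kept).\<close>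
definition dedup :: "'a list \<Rightarrow> 'a list" where "dedup xs = rev (remdups (rev xs))"

definition chain_log :: "(('t,'h) block \<Rightarrow> 'h) \<Rightarrow> ('t,'h) atom set \<Rightarrow> ('t,'h) block \<Rightarrow> 't list" where
  "chain_log H S b = dedup (concat (map btr (SOME bs. fchain H S b bs)))"

definition fin_update :: "'t list \<Rightarrow> 't list \<Rightarrow> 't list" where
  "fin_update C L = (if prefix C L then L else C)"

record ('t,'h) lst =
  lS :: "('t,'h) atom set"
  lv :: nat
  lentry :: nat
  lnull :: bool
  lnot :: "('t,'h) block option"
  llog :: "'t list"
  lpend :: "('t,'h) block set"
  lR :: "'t set"

definition init_state :: "nat \<Rightarrow> nat \<Rightarrow> ('t,'h) lst" where
  "init_state n f = \<lparr> lS = {(j, Vote gen) | j. j < n - f}, lv = 1, lentry = 0, lnull = False,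
      lnot = None, llog = [], lpend = {}, lR = {} \<rparr>"

text \<open>slot n f Delta H i t D X st st' Out: correct processor i at timeslot t, having received
  messages D and transactions X at t, moves from state st (end of t-1) to st' (end of t),
  sending the set Out of messages to all processors.\<close>
definition slot ::
  "nat \<Rightarrow> nat \<Rightarrow> nat \<Rightarrow> (('t::linorder,'h::linorder) block \<Rightarrow> 'h) \<Rightarrow> nat \<Rightarrow> nat \<Rightarrow>
   ('t,'h) atom set \<Rightarrow> 't set \<Rightarrow> ('t,'h) lst \<Rightarrow> ('t,'h) lst \<Rightarrow> ('t,'h) atom set \<Rightarrow> bool" where
  "slot n f \<Delta> H i t D X st st' Out \<longleftrightarrow>
   (let S0 = lS st;
        S1 = S0 \<union> {a \<in> D. valid_atom n a};
        R = lR st \<union> X;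
        v1 = lv st;
        O12 = new_msgs n f S0 S1;
        par = select_parent f S1 v1;
        need = R - \<Union> {set (btr b') | b'. b' \<in> anc H par \<inter> blocks S1}
    in \<exists>Tr b7 fo.
      (lead n v1 = i \<longrightarrow> distinct Tr \<and> set Tr = need) \<and>
      (let B3 = (v1, Tr, Some (H par));
           O3 = (if lead n v1 = i then {(i, Prop B3)} else {});
           S2 = S1 \<union> O3;
           c4 = ((\<exists>b. valid_proposal f H S2 v1 b) \<and> lnot st = None \<and> \<not> lnull st);
           B4 = (THE b. valid_proposal f H S2 v1 b);
           O4 = (if c4 then {(i, Vote B4)} else {});
           not4 = (if c4 then Some B4 else lnot st);
           S3 = S2 \<union> O4;
           c5 = (t = lentry st + 2 * \<Delta> \<and> \<not> lnull st \<and> not4 = None);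
           O5 = (if c5 then {(i, Null v1)} else {});
           null5 = (lnull st \<or> c5);
           S4 = S3 \<union> O5;
           c6 = hasNull f S4 v1;
           v6 = (if c6 then v1 + 1 else v1);
           null6 = (if c6 then False else null5);
           not6 = (if c6 then None else not4);
           ent6 = (if c6 then t else lentry st);
           c7 = (\<exists>b \<in> blocks S4. bview b = v6 \<and> hasM f S4 b)
       in (c7 \<longrightarrow> b7 \<in> blocks S4 \<and> bview b7 = v6 \<and> hasM f S4 b7) \<and>
         (let vote7 = (c7 \<and> not6 = None \<and> \<not> null6);
              O7 = (if vote7 then {(i, Vote b7)} else {});
              S5 = S4 \<union> O7;
              v7 = (if c7 then v6 + 1 else v6);
              null7 = (if c7 then False else null6);
              not7 = (if c7 then None else not6);
              ent7 = (if c7 then t else ent6);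
              c8 = (\<not> null7 \<and> not7 \<noteq> None \<and>
                    2*f+1 \<le> card {j. (j, Null v7) \<in> S5 \<or>
                               (\<exists>b. (j, Vote b) \<in> S5 \<and> bview b = v7 \<and> Some b \<noteq> not7)});
              O8 = (if c8 then {(i, Null v7)} else {});
              null8 = (null7 \<or> c8);
              S6 = S5 \<union> O8;
              pend9 = lpend st \<union> {b. hasL n f S6 b \<and> \<not> hasL n f S0 b};
              ready = {b \<in> pend9. \<exists>bs. fchain H S6 b bs}
          in distinct fo \<and> set fo = ready \<and>
             Out = O12 \<union> O3 \<union> O4 \<union> O5 \<union> O7 \<union> O8 \<and>
             st' = \<lparr> lS = S6, lv = v7, lentry = ent7, lnull = null8, lnot = not7,
                     llog = fold (\<lambda>b L. fin_update (chain_log H S6 b) L) fo (llog st),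
                     lpend = pend9 - ready, lR = R \<rparr>)))"

text \<open>Parameters: n, f, Delta, GST, hash function H, the set Byz of processors corrupted
  at some point, D i t = messages delivered to i at t, X i t = transactions received by i
  at t, Out i t = messages sent to all by i at t, st i t = state of i before timeslot t
  (st i (Suc t) = state at the end of timeslot t).\<close>
definition minimmit_exec ::
  "nat \<Rightarrow> nat \<Rightarrow> nat \<Rightarrow> nat \<Rightarrow> (('t::linorder,'h::linorder) block \<Rightarrow> 'h) \<Rightarrow> nat set \<Rightarrow>
   (nat \<Rightarrow> nat \<Rightarrow> ('t,'h) atom set) \<Rightarrow> (nat \<Rightarrow> nat \<Rightarrow> 't set) \<Rightarrow>
   (nat \<Rightarrow> nat \<Rightarrow> ('t,'h) atom set) \<Rightarrow> (nat \<Rightarrow> nat \<Rightarrow> ('t,'h) lst) \<Rightarrow> bool" where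
  "minimmit_exec n f \<Delta> GST H Byz D X Out st \<longleftrightarrow>
     5*f+1 \<le> n \<and> Byz \<subseteq> {..<n} \<and> card Byz \<le> f \<and> inj H \<and>
     (\<forall>i t. finite (X i t)) \<and>
     (\<forall>i. i < n \<and> i \<notin> Byz \<longrightarrow>
        st i 0 = init_state n f \<and>
        (\<forall>t. slot n f \<Delta> H i t (D i t) (X i t) (st i t) (st i (Suc t)) (Out i t))) \<and>
     (\<forall>i j t a. i < n \<and> i \<notin> Byz \<and> j < n \<and> j \<notin> Byz \<and> j \<noteq> i \<and> a \<in> Out i t \<longrightarrow>
        (\<exists>t'. t < t' \<and> t' \<le> max GST t + \<Delta> \<and> a \<in> D j t')) \<and>
     (\<forall>j t a. j < n \<and> j \<notin> Byz \<and> a \<in> D j t \<and> valid_atom n a \<longrightarrow>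
        (\<forall>s m. (s, m) \<in> sigs n a \<and> s < n \<and> s \<notin> Byz \<longrightarrow>
           m = Vote gen \<or> (\<exists>t0 < t. (s, m) \<in> Out s t0)))"

end

theory Submission
  imports Defs
begin

(*
  A correct processor votes at most once per view, and once it has voted in a view it nullifies
  that view only after seeing 2f+1 processors nullify it or vote for other blocks of it. If b is
  L-notarized, at least n - 2f correct processors voted for b, so at most 2f processors can ever
  send such messages. By induction on time, no correct voter of b ever nullifies view(b); hence
  view(b) is never nullified and no other block of view(b) is ever M-notarized. By a second
  induction on time, every block of a higher view voted by a correct processor descends from b:
  its parent is M-notarized and all views in between are nullified, so the parent has view at
  least view(b), and if equal it is b. Thus L-notarized blocks lie on one chain. As H is
  injective, the hash chains of comparable blocks are prefixes of each other, and every log of a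
  correct processor is the deduplicated transaction sequence along the hash chain of an
  L-notarized block, so any two logs are comparable.
*)

lemma bview_gen [simp]: "bview gen = 0"
  by (simp add: gen_def bview_def)

lemma bh_gen [simp]: "bh gen = None"
  by (simp add: gen_def bh_def)

lemma valid_block_view: "valid_block b \<Longrightarrow> b \<noteq> gen \<Longrightarrow> 1 \<le> bview b"
  unfolding valid_block_def by auto

lemma valid_atom_Vote_block: "valid_atom n (j, Vote b) \<Longrightarrow> valid_block b"
  unfolding valid_atom_def by simp

lemma blocks_valid: "\<forall>a \<in> S. valid_atom n a \<Longrightarrow> b \<in> blocks S \<Longrightarrow> valid_block b"
  unfolding blocks_def valid_atom_def valid_block_def by auto

lemma voters_mono: "S \<subseteq> S' \<Longrightarrow> voters S b \<subseteq> voters S' b"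
  by (auto simp: voters_def)

lemma nullers_mono: "S \<subseteq> S' \<Longrightarrow> nullers S v \<subseteq> nullers S' v"
  by (auto simp: nullers_def)

lemma hasM_mono: "S \<subseteq> S' \<Longrightarrow> hasM f S b \<Longrightarrow> hasM f S' b"
  unfolding hasM_def by (meson order_trans voters_mono)

lemma hasL_mono: "S \<subseteq> S' \<Longrightarrow> hasL n f S b \<Longrightarrow> hasL n f S' b"
  unfolding hasL_def by (meson order_trans voters_mono)

lemma hasNull_mono: "S \<subseteq> S' \<Longrightarrow> hasNull f S v \<Longrightarrow> hasNull f S' v"
  unfolding hasNull_def by (meson order_trans nullers_mono)

lemma hasL_imp_hasM:
  assumes "hasL n f S b" and "3*f+1 \<le> n"
  shows "hasM f S b"
proof -
  obtain Q where Q: "Q \<subseteq> voters S b" "card Q = n - f"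
    using assms(1) unfolding hasL_def by blast
  then have "2*f+1 \<le> card Q"
    using assms(2) by linarith
  then obtain Q' where "Q' \<subseteq> Q" "card Q' = 2*f+1"
    by (metis obtain_subset_with_card_n)
  with Q(1) show ?thesis
    unfolding hasM_def by blast
qed

lemma voters_bounded: "\<forall>a \<in> S. valid_atom n a \<Longrightarrow> voters S b \<subseteq> {..<n}"
  unfolding voters_def valid_atom_def by auto

lemma nullers_bounded: "\<forall>a \<in> S. valid_atom n a \<Longrightarrow> nullers S v \<subseteq> {..<n}"
  unfolding nullers_def valid_atom_def by auto

lemma lexmin_subset:
  assumes "finite A" and "\<exists>Q \<subseteq> A. card Q = k"
  shows "lexmin k A \<subseteq> A"
proof -
  define F where "F = {Q. Q \<subseteq> A \<and> card Q = k}"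
  have "finite F"
    unfolding F_def by (rule finite_subset[of _ "Pow A"]) (auto simp: assms(1))
  then have fin: "finite (sorted_list_of_set ` F)"
    by blast
  have "sorted_list_of_set ` F \<noteq> {}"
    using assms(2) unfolding F_def by blast
  with fin have "Min (sorted_list_of_set ` F) \<in> sorted_list_of_set ` F"
    by (rule Min_in)
  then obtain Q0 where Q0: "Q0 \<in> F" "Min (sorted_list_of_set ` F) = sorted_list_of_set Q0"
    by blast
  have least: "sorted_list_of_set Q0 \<le> sorted_list_of_set Q" if "Q \<in> F" for Q
    using Min_le[OF fin] that unfolding Q0(2) by blast
  have unique: "Q = Q0" if "Q \<in> F" "\<forall>Q' \<in> F. sorted_list_of_set Q \<le> sorted_list_of_set Q'" for Q
  proof -
    have "finite Q" "finite Q0"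
      using that(1) Q0(1) assms(1) finite_subset unfolding F_def by auto
    have "sorted_list_of_set Q = sorted_list_of_set Q0"
      using that(2) Q0(1) least[OF that(1)] by (intro order_antisym) blast+
    then have "set (sorted_list_of_set Q) = set (sorted_list_of_set Q0)"
      by (rule arg_cong)
    with \<open>finite Q\<close> \<open>finite Q0\<close> show ?thesis
      by simp
  qed
  have "lexmin k A = Q0"
    unfolding lexmin_def
  proof (rule the_equality)
    show "Q0 \<subseteq> A \<and> card Q0 = k \<and>
        (\<forall>Q'. Q' \<subseteq> A \<and> card Q' = k \<longrightarrow> sorted_list_of_set Q0 \<le> sorted_list_of_set Q')"
      using Q0(1) least unfolding F_def by blast
  qed (use unique in \<open>auto simp: F_def\<close>)
  then show ?thesis
    using Q0(1) unfolding F_def by simp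
qed

section \<open>Hash chains and deduplicated logs\<close>

lemma anc_trans: "d \<in> anc H c \<Longrightarrow> c \<in> anc H b \<Longrightarrow> d \<in> anc H b"
  by (induction rule: anc.induct) (auto intro: anc.parent)

definition hash_chain :: "(('t,'h) block \<Rightarrow> 'h) \<Rightarrow> ('t,'h) block \<Rightarrow> ('t,'h) block list \<Rightarrow> bool" where
  "hash_chain H b bs \<longleftrightarrow> bs \<noteq> [] \<and> hd bs = gen \<and> last bs = b \<and>
     (\<forall>k. Suc k < length bs \<longrightarrow> bh (bs ! Suc k) = Some (H (bs ! k)))"

lemma fchain_hash_chain: "fchain H S b bs \<Longrightarrow> hash_chain H b bs"
  unfolding fchain_def hash_chain_def by blast

lemma hash_chain_singleton: "hash_chain H b [c] \<longleftrightarrow> c = gen \<and> b = gen"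
  by (auto simp: hash_chain_def)

lemma hash_chain_snoc:
  assumes "bs \<noteq> []"
  shows "hash_chain H b (bs @ [c]) \<longleftrightarrow> c = b \<and> bh b = Some (H (last bs)) \<and> hash_chain H (last bs) bs"
proof -
  have "(\<forall>k. Suc k < length (bs @ [c]) \<longrightarrow> bh ((bs @ [c]) ! Suc k) = Some (H ((bs @ [c]) ! k))) \<longleftrightarrow>
        bh c = Some (H (last bs)) \<and> (\<forall>k. Suc k < length bs \<longrightarrow> bh (bs ! Suc k) = Some (H (bs ! k)))"
    using assms by (auto simp: nth_append last_conv_nth less_Suc_eq) (metis diff_Suc_Suc diff_zero)
  then show ?thesis
    using assms by (auto simp: hash_chain_def)
qed

lemma hash_chain_cases:
  assumes "hash_chain H b bs"
  obtains (genesis) "bs = [gen]" "b = gen"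
    | (extend) cs where "cs \<noteq> []" "bs = cs @ [b]" "bh b = Some (H (last cs))" "hash_chain H (last cs) cs"
proof -
  obtain cs c where bs: "bs = cs @ [c]"
    using assms unfolding hash_chain_def by (metis rev_exhaust)
  show thesis
  proof (cases "cs = []")
    case True
    with assms bs have "c = gen" "b = gen"
      by (simp_all add: hash_chain_singleton)
    with True bs show thesis
      by (intro genesis) simp_all
  next
    case False
    with assms bs have "c = b" "bh b = Some (H (last cs))" "hash_chain H (last cs) cs"
      by (simp_all add: hash_chain_snoc)
    with False bs show thesis
      by (intro extend) simp_all
  qed
qed

lemma hash_chain_unique:
  assumes "inj H" and "hash_chain H b bs" and "hash_chain H b bs'"
  shows "bs = bs'"
  using assms(2,3)
proof (induction bs arbitrary: b bs' rule: rev_induct)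
  case Nil
  then show ?case by (simp add: hash_chain_def)
next
  case (snoc c cs)
  from snoc.prems(1) show ?case
  proof (cases rule: hash_chain_cases)
    case genesis
    with snoc.prems(2) show ?thesis
      by (cases rule: hash_chain_cases) auto
  next
    case (extend ds)
    then have "cs = ds"
      by simp
    from snoc.prems(2) show ?thesis
    proof (cases rule: hash_chain_cases)
      case genesis
      with extend show ?thesis by simp
    next
      case (extend es)
      from \<open>bh b = Some (H (last ds))\<close> \<open>bh b = Some (H (last es))\<close> \<open>inj H\<close> have "last ds = last es"
        by (simp add: inj_eq)
      with \<open>hash_chain H (last es) es\<close> have "hash_chain H (last ds) es"
        by simp
      with snoc.IH \<open>cs = ds\<close> \<open>hash_chain H (last ds) ds\<close> have "ds = es"
        by blast
      with \<open>cs @ [c] = ds @ [b]\<close> \<open>bs' = es @ [b]\<close> show ?thesis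
        by simp
    qed
  qed
qed

lemma anc_hash_chain_prefix:
  assumes "inj H" and "c \<in> anc H b" and "hash_chain H b bs" and "hash_chain H c cs"
  shows "prefix cs bs"
proof -
  have "\<exists>cs. prefix cs bs \<and> hash_chain H c cs"
    using assms(2)
  proof (induction rule: anc.induct)
    case self
    then show ?case using assms(3) by blast
  next
    case (parent c p)
    then obtain cs where "prefix cs bs" "hash_chain H c cs"
      by blast
    from \<open>hash_chain H c cs\<close> show ?case
    proof (cases rule: hash_chain_cases)
      case genesis
      with parent.hyps(2) show ?thesis by simp
    next
      case (extend ds)
      with parent.hyps(3) \<open>inj H\<close> have "p = last ds"
        by (simp add: inj_eq)
      with extend \<open>prefix cs bs\<close> show ?thesis
        by (metis prefix_order.order_trans prefixI)
    qed
  qed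
  then show ?thesis
    using hash_chain_unique[OF assms(1,4)] by blast
qed

lemma remdups_append_filter:
  "remdups (xs @ ys) = remdups (filter (\<lambda>x. x \<notin> set ys) xs) @ remdups ys"
  by (induction xs) auto

lemma dedup_append: "dedup (xs @ ys) = dedup xs @ dedup (filter (\<lambda>x. x \<notin> set xs) ys)"
  by (simp add: dedup_def remdups_append_filter rev_filter)

lemma dedup_mono_prefix: "prefix xs ys \<Longrightarrow> prefix (dedup xs) (dedup ys)"
  by (auto simp: prefix_def dedup_append)

lemma concat_mono_prefix: "prefix xs ys \<Longrightarrow> prefix (concat xs) (concat ys)"
  by (auto simp: prefix_def)

lemma chain_log_eq:
  assumes "inj H" and "fchain H S b bs"
  shows "chain_log H S b = dedup (concat (map btr bs))"
proof -
  have "fchain H S b (SOME bs. fchain H S b bs)"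
    using someI assms(2) .
  then have "(SOME bs. fchain H S b bs) = bs"
    using hash_chain_unique[OF assms(1)] fchain_hash_chain assms(2) by blast
  then show ?thesis
    unfolding chain_log_def by simp
qed

section \<open>One timeslot of a correct processor\<close>

definition received :: "nat \<Rightarrow> ('t,'h) atom set \<Rightarrow> ('t,'h) lst \<Rightarrow> ('t,'h) atom set" where
  "received n D st = lS st \<union> {a \<in> D. valid_atom n a}"

lemma lS_subset_received: "lS st \<subseteq> received n D st"
  unfolding received_def by blast

definition own_msgs_known :: "nat \<Rightarrow> nat \<Rightarrow> ('t,'h) atom set \<Rightarrow> ('t,'h) lst \<Rightarrow> bool" where
  "own_msgs_known n i D st \<longleftrightarrow>
     (\<forall>m. (i, m) \<in> D \<and> valid_atom n (i, m) \<longrightarrow> m = Vote gen \<or> (i, m) \<in> lS st)"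

definition local_inv :: "nat \<Rightarrow> ('t,'h) lst \<Rightarrow> bool" where
  "local_inv i st \<longleftrightarrow> 1 \<le> lv st \<and> lnot st \<noteq> Some gen \<and>
     (\<forall>b. (i, Vote b) \<in> lS st \<and> b \<noteq> gen \<longrightarrow> bview b \<le> lv st) \<and>
     (\<forall>w. (i, Null w) \<in> lS st \<longrightarrow> w \<le> lv st) \<and>
     (\<forall>b. b \<noteq> gen \<longrightarrow> ((i, Vote b) \<in> lS st \<and> bview b = lv st \<longleftrightarrow> lnot st = Some b)) \<and>
     ((i, Null (lv st)) \<in> lS st \<longleftrightarrow> lnull st) \<and>
     (\<forall>b b'. (i, Vote b) \<in> lS st \<longrightarrow> (i, Vote b') \<in> lS st \<longrightarrow> b \<noteq> gen \<longrightarrow> b' \<noteq> gen \<longrightarrow>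
        bview b = bview b' \<longrightarrow> b = b')"

lemma local_invD:
  assumes "local_inv i st"
  shows "1 \<le> lv st" "lnot st \<noteq> Some gen"
    "(i, Vote b) \<in> lS st \<Longrightarrow> b \<noteq> gen \<Longrightarrow> bview b \<le> lv st"
    "(i, Null w) \<in> lS st \<Longrightarrow> w \<le> lv st"
    "b \<noteq> gen \<Longrightarrow> (i, Vote b) \<in> lS st \<and> bview b = lv st \<longleftrightarrow> lnot st = Some b"
    "(i, Null (lv st)) \<in> lS st \<longleftrightarrow> lnull st"
    "(i, Vote b) \<in> lS st \<Longrightarrow> (i, Vote b') \<in> lS st \<Longrightarrow> b \<noteq> gen \<Longrightarrow> b' \<noteq> gen \<Longrightarrow>
       bview b = bview b' \<Longrightarrow> b = b'"
  using assms unfolding local_inv_def by blast+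

(* The messages that count, in step (8), towards nullifying view(b) after voting for b. *)
definition dissents :: "('t,'h) atom set \<Rightarrow> ('t,'h) block \<Rightarrow> nat \<Rightarrow> bool" where
  "dissents S b j \<longleftrightarrow>
     (j, Null (bview b)) \<in> S \<or> (\<exists>b'. b' \<noteq> b \<and> bview b' = bview b \<and> (j, Vote b') \<in> S)"

lemma valid_proposal_unique:
  "valid_proposal f H S v b \<Longrightarrow> valid_proposal f H S v b' \<Longrightarrow> b = b'"
  unfolding valid_proposal_def by metis

locale slot_run =
  fixes n f \<Delta> :: nat and H :: "('t::linorder,'h::linorder) block \<Rightarrow> 'h" and i t :: nat
    and D :: "('t,'h) atom set" and X :: "'t set" and st st' :: "('t,'h) lst"
    and Out S0 S1 R v1 O12 par need Tr b7 fo B3 O3 S2 c4 B4 O4 not4 S3 c5 O5 null5 S4 c6 v6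
      null6 not6 ent6 c7 vote7 O7 S5 v7 null7 not7 ent7 c8 O8 null8 S6 pend9 ready
  assumes S0_def: "S0 = lS st"
    and S1_def: "S1 = S0 \<union> {a \<in> D. valid_atom n a}"
    and R_def: "R = lR st \<union> X"
    and v1_def: "v1 = lv st"
    and O12_def: "O12 = new_msgs n f S0 S1"
    and par_def: "par = select_parent f S1 v1"
    and need_def: "need = R - \<Union> {set (btr b') | b'. b' \<in> anc H par \<inter> blocks S1}"
    and Tr_prop: "lead n v1 = i \<longrightarrow> distinct Tr \<and> set Tr = need"
    and B3_def: "B3 = (v1, Tr, Some (H par))"
    and O3_def: "O3 = (if lead n v1 = i then {(i, Prop B3)} else {})"
    and S2_def: "S2 = S1 \<union> O3"
    and c4_def: "c4 = ((\<exists>b. valid_proposal f H S2 v1 b) \<and> lnot st = None \<and> \<not> lnull st)"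
    and B4_def: "B4 = (THE b. valid_proposal f H S2 v1 b)"
    and O4_def: "O4 = (if c4 then {(i, Vote B4)} else {})"
    and not4_def: "not4 = (if c4 then Some B4 else lnot st)"
    and S3_def: "S3 = S2 \<union> O4"
    and c5_def: "c5 = (t = lentry st + 2 * \<Delta> \<and> \<not> lnull st \<and> not4 = None)"
    and O5_def: "O5 = (if c5 then {(i, Null v1)} else {})"
    and null5_def: "null5 = (lnull st \<or> c5)"
    and S4_def: "S4 = S3 \<union> O5"
    and c6_def: "c6 = hasNull f S4 v1"
    and v6_def: "v6 = (if c6 then v1 + 1 else v1)"
    and null6_def: "null6 = (if c6 then False else null5)"
    and not6_def: "not6 = (if c6 then None else not4)"
    and ent6_def: "ent6 = (if c6 then t else lentry st)"
    and c7_def: "c7 = (\<exists>b \<in> blocks S4. bview b = v6 \<and> hasM f S4 b)"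
    and b7_prop: "c7 \<longrightarrow> b7 \<in> blocks S4 \<and> bview b7 = v6 \<and> hasM f S4 b7"
    and vote7_def: "vote7 = (c7 \<and> not6 = None \<and> \<not> null6)"
    and O7_def: "O7 = (if vote7 then {(i, Vote b7)} else {})"
    and S5_def: "S5 = S4 \<union> O7"
    and v7_def: "v7 = (if c7 then v6 + 1 else v6)"
    and null7_def: "null7 = (if c7 then False else null6)"
    and not7_def: "not7 = (if c7 then None else not6)"
    and ent7_def: "ent7 = (if c7 then t else ent6)"
    and c8_def: "c8 = (\<not> null7 \<and> not7 \<noteq> None \<and>
                    2*f+1 \<le> card {j. (j, Null v7) \<in> S5 \<or>
                               (\<exists>b. (j, Vote b) \<in> S5 \<and> bview b = v7 \<and> Some b \<noteq> not7)})"
    and O8_def: "O8 = (if c8 then {(i, Null v7)} else {})"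
    and null8_def: "null8 = (null7 \<or> c8)"
    and S6_def: "S6 = S5 \<union> O8"
    and pend9_def: "pend9 = lpend st \<union> {b. hasL n f S6 b \<and> \<not> hasL n f S0 b}"
    and ready_def: "ready = {b \<in> pend9. \<exists>bs. fchain H S6 b bs}"
    and fo_distinct: "distinct fo"
    and fo_set: "set fo = ready"
    and Out_def: "Out = O12 \<union> O3 \<union> O4 \<union> O5 \<union> O7 \<union> O8"
    and st'_def: "st' = \<lparr> lS = S6, lv = v7, lentry = ent7, lnull = null8, lnot = not7,
                     llog = fold (\<lambda>b L. fin_update (chain_log H S6 b) L) fo (llog st),
                     lpend = pend9 - ready, lR = R \<rparr>"

lemma Let_eq_ex: "Let x P = (\<exists>y. y = x \<and> P y)"
  by simp

lemma slot_run_cases: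
  assumes "slot n f \<Delta> H i t D X st st' Out"
  obtains S0 S1 R v1 O12 par need Tr b7 fo B3 O3 S2 c4 B4 O4 not4 S3 c5 O5 null5 S4 c6 v6 null6
    not6 ent6 c7 vote7 O7 S5 v7 null7 not7 ent7 c8 O8 null8 S6 pend9 ready
  where "slot_run n f \<Delta> H i t D X st st' Out S0 S1 R v1 O12 par need Tr b7 fo B3 O3 S2 c4 B4 O4
    not4 S3 c5 O5 null5 S4 c6 v6 null6 not6 ent6 c7 vote7 O7 S5 v7 null7 not7 ent7 c8 O8 null8 S6
    pend9 ready"
  using assms unfolding slot_def Let_eq_ex
  by (elim exE conjE) (rule that, unfold slot_run_def, intro conjI, assumption+)

context slot_run
begin

lemma S1_received: "S1 = received n D st"
  by (simp add: S1_def S0_def received_def)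

lemma st'_simps [simp]:
  "lS st' = S6" "lv st' = v7" "lnull st' = null8" "lnot st' = not7" "lpend st' = pend9 - ready"
  "llog st' = fold (\<lambda>b L. fin_update (chain_log H S6 b) L) fo (llog st)"
  by (simp_all add: st'_def)

lemma S6_eq: "S6 = S1 \<union> O3 \<union> O4 \<union> O5 \<union> O7 \<union> O8"
  by (simp add: S6_def S5_def S4_def S3_def S2_def)

lemma lS_mono: "lS st \<subseteq> lS st'"
  using S6_eq S1_def S0_def by auto

lemma v1_le_v6: "v1 \<le> v6" and v6_le_v7: "v6 \<le> v7"
  by (simp_all add: v6_def v7_def)

lemma lv_mono: "lv st \<le> lv st'"
  using v1_le_v6 v6_le_v7 v1_def by simp

lemma other_signer: "(j, m) \<in> lS st' \<Longrightarrow> j \<noteq> i \<Longrightarrow> (j, m) \<in> S1"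
  using S6_eq O3_def O4_def O5_def O7_def O8_def by (auto split: if_splits)

lemma own_msg_cases:
  "(i, m) \<in> lS st' \<Longrightarrow> (i, m) \<in> S1 \<or> m = Prop B3 \<or> (m = Vote B4 \<and> c4) \<or> (m = Null v1 \<and> c5) \<or>
     (m = Vote b7 \<and> vote7) \<or> (m = Null v7 \<and> c8)"
  using S6_eq O3_def O4_def O5_def O7_def O8_def by (auto split: if_splits)

lemma own_msg_added:
  "c4 \<Longrightarrow> (i, Vote B4) \<in> lS st'" "c5 \<Longrightarrow> (i, Null v1) \<in> lS st'"
  "vote7 \<Longrightarrow> (i, Vote b7) \<in> lS st'" "c8 \<Longrightarrow> (i, Null v7) \<in> lS st'"
  using S6_eq O4_def O5_def O7_def O8_def by auto

lemma B4_facts: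
  assumes c4
  shows "valid_proposal f H S2 v1 B4" "bview B4 = v1" "bh B4 \<noteq> None" "B4 \<noteq> gen"
    "lnot st = None" "\<not> lnull st"
proof -
  show vp: "valid_proposal f H S2 v1 B4"
    using assms c4_def B4_def theI[of "valid_proposal f H S2 v1"] valid_proposal_unique by metis
  then show "bview B4 = v1"
    unfolding valid_proposal_def by simp
  from vp show "bh B4 \<noteq> None"
    unfolding valid_proposal_def by auto
  then show "B4 \<noteq> gen"
    by auto
  show "lnot st = None" "\<not> lnull st"
    using assms c4_def by simp_all
qed

lemma b7_facts:
  assumes "1 \<le> lv st" and vote7
  shows "c7" "bview b7 = v6" "b7 \<noteq> gen" "\<not> c6 \<Longrightarrow> \<not> c4 \<and> lnot st = None \<and> \<not> lnull st \<and> \<not> c5"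
proof -
  show c7 "bview b7 = v6"
    using assms(2) vote7_def b7_prop by simp_all
  then show "b7 \<noteq> gen"
    using assms(1) v1_le_v6 v1_def by auto
  show "\<not> c6 \<Longrightarrow> \<not> c4 \<and> lnot st = None \<and> \<not> lnull st \<and> \<not> c5"
    using assms(2) vote7_def not6_def not4_def null6_def null5_def by (auto split: if_splits)
qed

lemma c5_facts: "c5 \<Longrightarrow> \<not> lnull st \<and> \<not> c4 \<and> lnot st = None"
  using c5_def not4_def by (auto split: if_splits)

lemma c8_facts: "c8 \<Longrightarrow> \<not> c5 \<and> \<not> c6 \<and> \<not> c7 \<and> \<not> lnull st \<and> not7 = not4 \<and> not4 \<noteq> None \<and> v7 = v1"
  using c8_def null7_def not7_def not6_def null6_def null5_def c5_def v7_def v6_def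
  by (auto split: if_splits)

lemma not7_eq: "not7 = (if c6 \<or> c7 then None else not4)"
  using not7_def not6_def by auto

lemma null8_eq: "null8 = (if c6 \<or> c7 then False else lnull st \<or> c5 \<or> c8)"
  using null8_def null7_def null6_def null5_def c8_facts by auto

lemma own_vote_step:
  assumes "own_msgs_known n i D st" and "b \<noteq> gen"
  shows "(i, Vote b) \<in> lS st' \<longleftrightarrow> (i, Vote b) \<in> lS st \<or> (b = B4 \<and> c4) \<or> (b = b7 \<and> vote7)"
  using own_msg_cases[of "Vote b"] own_msg_added lS_mono assms S1_def S0_def
  unfolding own_msgs_known_def by auto

lemma own_null_step:
  assumes "own_msgs_known n i D st"
  shows "(i, Null w) \<in> lS st' \<longleftrightarrow> (i, Null w) \<in> lS st \<or> (w = v1 \<and> c5) \<or> (w = v7 \<and> c8)"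
  using own_msg_cases[of "Null w"] own_msg_added lS_mono assms S1_def S0_def
  unfolding own_msgs_known_def by auto

lemma valid_step:
  assumes valid: "\<forall>a \<in> lS st. valid_atom n a" and "1 \<le> lv st" and "i < n"
  shows "\<forall>a \<in> lS st'. valid_atom n a"
proof -
  have "\<forall>a \<in> S1. valid_atom n a"
    using valid S1_def S0_def by auto
  moreover have "\<forall>a \<in> O3. valid_atom n a"
    using assms(2,3) O3_def B3_def v1_def
    unfolding valid_atom_def valid_block_def bview_def bh_def gen_def by auto
  moreover have "\<forall>a \<in> O4. valid_atom n a"
    using B4_facts assms(3) O4_def v1_def assms(2)
    unfolding valid_atom_def valid_block_def by auto
  moreover have "\<forall>a \<in> O5 \<union> O8. valid_atom n a"
    using assms(3) O5_def O8_def unfolding valid_atom_def by auto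
  moreover have "\<forall>a \<in> O7. valid_atom n a"
  proof -
    have "\<forall>a \<in> S4. valid_atom n a"
      using calculation S4_def S3_def S2_def by auto
    then have "vote7 \<Longrightarrow> valid_block b7"
      using b7_prop vote7_def blocks_valid by blast
    then show ?thesis
      using assms(3) O7_def unfolding valid_atom_def by auto
  qed
  ultimately show ?thesis
    using S6_eq by auto
qed

lemma Out_subset:
  assumes "\<forall>a \<in> lS st. valid_atom n a"
  shows "Out \<subseteq> lS st'"
proof -
  have valid: "\<forall>a \<in> S1. valid_atom n a"
    using assms S1_def S0_def by auto
  have lexmin_sub: "lexmin k A \<subseteq> A" if "A \<subseteq> {..<n}" "\<exists>Q \<subseteq> A. card Q = k" for k A
    using lexmin_subset[OF finite_subset[OF that(1)] that(2)] by simp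
  have "O12 \<subseteq> S1"
  proof
    fix a
    assume "a \<in> O12"
    then consider (null) j v where "a = (j, Null v)" "hasNull f S1 v" "j \<in> lexmin (2*f+1) (nullers S1 v)"
      | (M) j b where "a = (j, Vote b)" "hasM f S1 b" "j \<in> lexmin (2*f+1) (voters S1 b)"
      | (L) j b where "a = (j, Vote b)" "hasL n f S1 b" "j \<in> lexmin (n-f) (voters S1 b)"
      unfolding O12_def new_msgs_def by blast
    then show "a \<in> S1"
    proof cases
      case null
      then have "j \<in> nullers S1 v"
        using lexmin_sub[OF nullers_bounded[OF valid]] unfolding hasNull_def by blast
      with null show ?thesis
        by (simp add: nullers_def)
    next
      case M
      then have "j \<in> voters S1 b"
        using lexmin_sub[OF voters_bounded[OF valid]] unfolding hasM_def by blast
      with M show ?thesis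
        by (simp add: voters_def)
    next
      case L
      then have "j \<in> voters S1 b"
        using lexmin_sub[OF voters_bounded[OF valid]] unfolding hasL_def by blast
      with L show ?thesis
        by (simp add: voters_def)
    qed
  qed
  then show ?thesis
    using Out_def S6_eq by auto
qed

lemma own_vote_justified:
  assumes "(i, Vote b) \<in> lS st'" and "1 \<le> lv st"
  shows "(i, Vote b) \<in> S1 \<or> hasM f S1 b \<or>
    (\<exists>p. bh b = Some (H p) \<and> hasM f S1 p \<and> (\<forall>u. bview p < u \<and> u < bview b \<longrightarrow> hasNull f (lS st') u))"
proof -
  have voters_S2: "voters S2 c = voters S1 c" for c
    using S2_def O3_def unfolding voters_def by auto
  have "(i, Vote b) \<in> S1 \<or> (b = B4 \<and> c4) \<or> (b = b7 \<and> vote7)"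
    using own_msg_cases[OF assms(1)] by auto
  then show ?thesis
  proof (elim disjE conjE)
    assume "b = B4" c4
    then have "valid_proposal f H S2 v1 b" "bview b = v1"
      using B4_facts by auto
    then obtain p where p: "bh b = Some (H p)" "hasM f S2 p"
      "\<forall>u. bview p < u \<and> u < bview b \<longrightarrow> hasNull f S2 u"
      unfolding valid_proposal_def by blast
    have "S2 \<subseteq> lS st'"
      using S6_eq S2_def by auto
    with p show ?thesis
      using hasNull_mono voters_S2 unfolding hasM_def by metis
  next
    assume "b = b7" vote7
    have "c4 \<Longrightarrow> B4 \<noteq> b7"
      using B4_facts b7_facts[OF assms(2) \<open>vote7\<close>] v6_def by (cases c6) auto
    then have "voters S4 b7 \<subseteq> voters S1 b7"
      using S4_def S3_def S2_def O3_def O4_def O5_def unfolding voters_def by auto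
    moreover have "hasM f S4 b7"
      using b7_prop b7_facts(1)[OF assms(2) \<open>vote7\<close>] by blast
    ultimately show ?thesis
      using \<open>b = b7\<close> unfolding hasM_def by (meson order_trans)
  qed blast
qed

lemma pending_step:
  assumes "\<forall>b \<in> lpend st. b \<noteq> gen \<and> hasL n f (lS st) b" and "hasL n f (lS st) gen"
  shows "\<forall>b \<in> lpend st'. b \<noteq> gen \<and> hasL n f (lS st') b"
    and "\<forall>b \<in> set fo. b \<noteq> gen \<and> hasL n f (lS st') b \<and> (\<exists>bs. fchain H (lS st') b bs)"
proof -
  have "hasL n f S6 b" if "hasL n f (lS st) b" for b
    using hasL_mono[OF lS_mono that] by simp
  then have "b \<noteq> gen \<and> hasL n f S6 b" if "b \<in> pend9" for b
    using that assms pend9_def S0_def by blast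
  then show "\<forall>b \<in> lpend st'. b \<noteq> gen \<and> hasL n f (lS st') b"
    "\<forall>b \<in> set fo. b \<noteq> gen \<and> hasL n f (lS st') b \<and> (\<exists>bs. fchain H (lS st') b bs)"
    using ready_def fo_set by auto
qed

context
  assumes inv: "local_inv i st" and known: "own_msgs_known n i D st"
begin

lemma own_vote_view_le:
  assumes "(i, Vote b) \<in> lS st'" and "b \<noteq> gen"
  shows "bview b \<le> v7"
proof -
  have "(i, Vote b) \<in> lS st \<or> (b = B4 \<and> c4) \<or> (b = b7 \<and> vote7)"
    using own_vote_step[OF known assms(2)] assms(1) by blast
  moreover have "(i, Vote b) \<in> lS st \<Longrightarrow> bview b \<le> v1"
    using local_invD(3)[OF inv _ assms(2)] v1_def by simp
  ultimately show ?thesis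
    using B4_facts(2) b7_facts(2)[OF local_invD(1)[OF inv]] v1_le_v6 v6_le_v7 by auto
qed

lemma own_null_view_le:
  assumes "(i, Null w) \<in> lS st'"
  shows "w \<le> v7"
proof -
  have "(i, Null w) \<in> lS st \<or> w = v1 \<or> w = v7"
    using own_null_step[OF known] assms by blast
  moreover have "(i, Null w) \<in> lS st \<Longrightarrow> w \<le> v1"
    using local_invD(4)[OF inv] v1_def by simp
  ultimately show ?thesis
    using v1_le_v6 v6_le_v7 by auto
qed

lemma current_vote_iff:
  assumes "b \<noteq> gen"
  shows "(i, Vote b) \<in> lS st' \<and> bview b = v7 \<longleftrightarrow> not7 = Some b"
  using own_vote_step[OF known assms] local_invD(3)[OF inv _ assms] local_invD(5)[OF inv assms]
    B4_facts b7_facts[OF local_invD(1)[OF inv]]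
    not7_eq not4_def v6_def v7_def v1_def
  by (cases c6) auto

lemma current_null_iff: "(i, Null v7) \<in> lS st' \<longleftrightarrow> null8"
proof -
  have "(i, Null v7) \<in> lS st \<longleftrightarrow> v7 = lv st \<and> lnull st"
    using local_invD(4)[OF inv, of v7] local_invD(6)[OF inv] v1_le_v6 v6_le_v7 v1_def
    by (cases "v7 = lv st") auto
  then show ?thesis
    using own_null_step[OF known] null8_eq c5_facts c8_facts v6_def v7_def v1_def by auto
qed

lemma own_votes_unique:
  assumes "(i, Vote b) \<in> lS st'" "(i, Vote b') \<in> lS st'" "b \<noteq> gen" "b' \<noteq> gen"
    and "bview b = bview b'"
  shows "b = b'"
proof -
  have old: "bview c \<le> v1 \<and> (bview c = v1 \<longrightarrow> lnot st = Some c)"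
    if "(i, Vote c) \<in> lS st" "c \<noteq> gen" for c
    using local_invD(3,5)[OF inv] that v1_def by blast
  have "bview c \<noteq> bview B4" if "(i, Vote c) \<in> lS st" "c \<noteq> gen" c4 for c
    using old[OF that(1,2)] B4_facts[OF that(3)] by auto
  moreover have "bview c \<noteq> bview b7" if "(i, Vote c) \<in> lS st" "c \<noteq> gen" vote7 for c
    using old[OF that(1,2)] b7_facts[OF local_invD(1)[OF inv] that(3)] v6_def by (cases c6) auto
  moreover have "c4 \<Longrightarrow> vote7 \<Longrightarrow> bview B4 \<noteq> bview b7"
    using B4_facts b7_facts[OF local_invD(1)[OF inv]] v6_def by auto
  ultimately show ?thesis
    using assms own_vote_step[OF known] local_invD(7)[OF inv] by metis
qed

lemma local_inv_step: "local_inv i st'"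
  unfolding local_inv_def st'_simps(2-4)
proof (intro conjI allI impI)
  show "1 \<le> v7"
    using local_invD(1)[OF inv] v1_le_v6 v6_le_v7 v1_def by simp
  show "not7 \<noteq> Some gen"
    using local_invD(2)[OF inv] B4_facts not7_eq not4_def by auto
  show "bview b \<le> v7" if "(i, Vote b) \<in> lS st' \<and> b \<noteq> gen" for b
    using that own_vote_view_le by blast
  show "w \<le> v7" if "(i, Null w) \<in> lS st'" for w
    using that by (rule own_null_view_le)
  show "(i, Vote b) \<in> lS st' \<and> bview b = v7 \<longleftrightarrow> not7 = Some b" if "b \<noteq> gen" for b
    using that by (rule current_vote_iff)
  show "(i, Null v7) \<in> lS st' \<longleftrightarrow> null8"
    by (rule current_null_iff)
  show "b = b'" if "(i, Vote b) \<in> lS st'" "(i, Vote b') \<in> lS st'" "b \<noteq> gen" "b' \<noteq> gen"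
    "bview b = bview b'" for b b'
    using that by (rule own_votes_unique)
qed

lemma new_own_vote_view:
  assumes "(i, Vote b) \<in> lS st'" "(i, Vote b) \<notin> lS st" "b \<noteq> gen"
  shows "lv st \<le> bview b \<and> (bview b = lv st \<longrightarrow> lnot st = None \<and> \<not> lnull st)"
proof -
  have "(b = B4 \<and> c4) \<or> (b = b7 \<and> vote7)"
    using own_vote_step[OF known assms(3)] assms(1,2) by auto
  then show ?thesis
    using B4_facts b7_facts[OF local_invD(1)[OF inv]] v1_def v6_def by (cases c6) auto
qed

lemma timeout_null_no_vote:
  assumes c5 and "b \<noteq> gen" and "bview b = v1"
  shows "(i, Vote b) \<notin> lS st'"
proof
  assume "(i, Vote b) \<in> lS st'"
  then have "(i, Vote b) \<in> lS st \<or> (b = B4 \<and> c4) \<or> (b = b7 \<and> vote7)"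
    using own_vote_step[OF known assms(2)] by blast
  then show False
    using assms c5_facts local_invD(5)[OF inv assms(2)] b7_facts[OF local_invD(1)[OF inv]] v1_def v6_def
    by (cases c6) auto
qed

lemma conflict_null_justified:
  assumes c8 and valid: "\<forall>a \<in> lS st. valid_atom n a"
  obtains b M where "b \<noteq> gen" "bview b = v1" "(i, Vote b) \<in> lS st'"
    "2*f+1 \<le> card M" "M \<subseteq> {..<n}" "\<forall>j \<in> M. dissents S1 b j"
proof -
  note c8 = c8_facts[OF assms(1)]
  then obtain b where b: "not4 = Some b"
    by auto
  have b_facts: "b \<noteq> gen \<and> bview b = v1 \<and> (i, Vote b) \<in> lS st'"
  proof (cases c4)
    case True
    then show ?thesis
      using b not4_def B4_facts own_msg_added(1) by auto
  next
    case False
    then have "lnot st = Some b"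
      using b not4_def by simp
    moreover from this have "b \<noteq> gen"
      using local_invD(2)[OF inv] by auto
    ultimately show ?thesis
      using local_invD(5)[OF inv \<open>b \<noteq> gen\<close>] v1_def lS_mono by auto
  qed
  define M where
    "M = {j. (j, Null v7) \<in> S5 \<or> (\<exists>b'. (j, Vote b') \<in> S5 \<and> bview b' = v7 \<and> Some b' \<noteq> not7)}"
  have "S5 \<subseteq> S1 \<union> {(i, Prop B3), (i, Vote b)}"
    using c8 b S5_def S4_def S3_def S2_def O3_def O4_def O5_def O7_def vote7_def not4_def
    by (auto split: if_splits)
  then have dissent: "\<forall>j \<in> M. dissents S1 b j"
    using c8 b b_facts unfolding M_def dissents_def by fastforce
  moreover have "M \<subseteq> {..<n}"
  proof
    fix j
    assume "j \<in> M"
    with dissent obtain m where "(j, m) \<in> S1"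
      unfolding dissents_def by blast
    then show "j \<in> {..<n}"
      using valid S1_def S0_def unfolding valid_atom_def by auto
  qed
  moreover have "2*f+1 \<le> card M"
    using assms(1) c8_def M_def by simp
  ultimately show thesis
    using that b_facts by blast
qed

lemma new_null_justified:
  assumes "\<forall>a \<in> lS st. valid_atom n a" and "(i, Null w) \<in> lS st'" and "(i, Null w) \<notin> lS st"
  shows "(\<forall>b. b \<noteq> gen \<and> bview b = w \<longrightarrow> (i, Vote b) \<notin> lS st') \<or>
    (\<exists>b M. b \<noteq> gen \<and> bview b = w \<and> (i, Vote b) \<in> lS st' \<and> 2*f+1 \<le> card M \<and> M \<subseteq> {..<n} \<and>
       (\<forall>j \<in> M. dissents S1 b j))"
proof -
  have "(w = v1 \<and> c5) \<or> (w = v7 \<and> c8)"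
    using own_null_step[OF known] assms(2,3) by auto
  then show ?thesis
  proof (elim disjE conjE)
    assume "w = v1" c5
    then show ?thesis
      using timeout_null_no_vote by blast
  next
    assume "w = v7" c8
    then have "w = v1"
      using c8_facts by simp
    with \<open>c8\<close> show ?thesis
      using conflict_null_justified[OF _ assms(1)] by metis
  qed
qed

end

end

lemma slot_lS_mono: "slot n f \<Delta> H i t D X st st' Out \<Longrightarrow> lS st \<subseteq> lS st'"
  by (erule slot_run_cases) (rule slot_run.lS_mono)

lemma slot_lv_mono: "slot n f \<Delta> H i t D X st st' Out \<Longrightarrow> lv st \<le> lv st'"
  by (erule slot_run_cases) (rule slot_run.lv_mono)

lemma slot_other_signer:
  "slot n f \<Delta> H i t D X st st' Out \<Longrightarrow> (j, m) \<in> lS st' \<Longrightarrow> j \<noteq> i \<Longrightarrow> (j, m) \<in> received n D st"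
  by (erule slot_run_cases) (metis slot_run.other_signer slot_run.S1_received)

lemma slot_valid:
  "slot n f \<Delta> H i t D X st st' Out \<Longrightarrow> \<forall>a \<in> lS st. valid_atom n a \<Longrightarrow> 1 \<le> lv st \<Longrightarrow> i < n \<Longrightarrow>
    \<forall>a \<in> lS st'. valid_atom n a"
  by (erule slot_run_cases) (erule slot_run.valid_step)

lemma slot_Out_subset:
  "slot n f \<Delta> H i t D X st st' Out \<Longrightarrow> \<forall>a \<in> lS st. valid_atom n a \<Longrightarrow> Out \<subseteq> lS st'"
  by (erule slot_run_cases) (erule slot_run.Out_subset)

lemma slot_local_inv:
  "slot n f \<Delta> H i t D X st st' Out \<Longrightarrow> local_inv i st \<Longrightarrow> own_msgs_known n i D st \<Longrightarrow>
    local_inv i st'"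
  by (erule slot_run_cases) (erule slot_run.local_inv_step)

lemma slot_new_own_vote_view:
  "slot n f \<Delta> H i t D X st st' Out \<Longrightarrow> local_inv i st \<Longrightarrow> own_msgs_known n i D st \<Longrightarrow>
    (i, Vote b) \<in> lS st' \<Longrightarrow> (i, Vote b) \<notin> lS st \<Longrightarrow> b \<noteq> gen \<Longrightarrow>
    lv st \<le> bview b \<and> (bview b = lv st \<longrightarrow> lnot st = None \<and> \<not> lnull st)"
  by (erule slot_run_cases) (erule slot_run.new_own_vote_view)

lemma slot_own_vote_justified:
  "slot n f \<Delta> H i t D X st st' Out \<Longrightarrow> (i, Vote b) \<in> lS st' \<Longrightarrow> 1 \<le> lv st \<Longrightarrow>
    (i, Vote b) \<in> received n D st \<or> hasM f (received n D st) b \<or>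
    (\<exists>p. bh b = Some (H p) \<and> hasM f (received n D st) p \<and>
       (\<forall>u. bview p < u \<and> u < bview b \<longrightarrow> hasNull f (lS st') u))"
  by (erule slot_run_cases) (metis slot_run.own_vote_justified slot_run.S1_received)

lemma slot_new_null_justified:
  "slot n f \<Delta> H i t D X st st' Out \<Longrightarrow> local_inv i st \<Longrightarrow> own_msgs_known n i D st \<Longrightarrow>
    \<forall>a \<in> lS st. valid_atom n a \<Longrightarrow> (i, Null w) \<in> lS st' \<Longrightarrow> (i, Null w) \<notin> lS st \<Longrightarrow>
    (\<forall>b. b \<noteq> gen \<and> bview b = w \<longrightarrow> (i, Vote b) \<notin> lS st') \<or>
    (\<exists>b M. b \<noteq> gen \<and> bview b = w \<and> (i, Vote b) \<in> lS st' \<and> 2*f+1 \<le> card M \<and> M \<subseteq> {..<n} \<and>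
       (\<forall>j \<in> M. dissents (received n D st) b j))"
  by (erule slot_run_cases) (metis slot_run.new_null_justified slot_run.S1_received)

lemma slot_pending:
  "slot n f \<Delta> H i t D X st st' Out \<Longrightarrow> \<forall>b \<in> lpend st. b \<noteq> gen \<and> hasL n f (lS st) b \<Longrightarrow>
    hasL n f (lS st) gen \<Longrightarrow> \<forall>b \<in> lpend st'. b \<noteq> gen \<and> hasL n f (lS st') b"
  by (erule slot_run_cases) (erule slot_run.pending_step)

lemma slot_llog:
  "slot n f \<Delta> H i t D X st st' Out \<Longrightarrow> \<forall>b \<in> lpend st. b \<noteq> gen \<and> hasL n f (lS st) b \<Longrightarrow>
    hasL n f (lS st) gen \<Longrightarrow>
    \<exists>fo. (\<forall>b \<in> set fo. b \<noteq> gen \<and> hasL n f (lS st') b \<and> (\<exists>bs. fchain H (lS st') b bs)) \<and>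
      llog st' = fold (\<lambda>b L. fin_update (chain_log H (lS st') b) L) fo (llog st)"
  by (erule slot_run_cases) (metis slot_run.pending_step(2) slot_run.st'_simps(1,6))

section \<open>Executions\<close>

locale minimmit_execution =
  fixes n f \<Delta> GST :: nat and H :: "('t::linorder,'h::linorder) block \<Rightarrow> 'h" and Byz :: "nat set"
    and D :: "nat \<Rightarrow> nat \<Rightarrow> ('t,'h) atom set" and X :: "nat \<Rightarrow> nat \<Rightarrow> 't set"
    and Out :: "nat \<Rightarrow> nat \<Rightarrow> ('t,'h) atom set" and st :: "nat \<Rightarrow> nat \<Rightarrow> ('t,'h) lst"
  assumes exec: "minimmit_exec n f \<Delta> GST H Byz D X Out st"
begin

abbreviation correct :: "nat \<Rightarrow> bool" where
  "correct j \<equiv> j < n \<and> j \<notin> Byz"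

lemma n_bound: "5*f+1 \<le> n" and card_Byz: "card Byz \<le> f" and inj_H: "inj H"
  and finite_Byz: "finite Byz"
  using exec finite_subset[of Byz "{..<n}"] unfolding minimmit_exec_def by auto

lemma init: "correct i \<Longrightarrow> st i 0 = init_state n f"
  using exec unfolding minimmit_exec_def by auto

lemma slot_step: "correct i \<Longrightarrow> slot n f \<Delta> H i t (D i t) (X i t) (st i t) (st i (Suc t)) (Out i t)"
  using exec unfolding minimmit_exec_def by auto

lemma delivered_sent:
  assumes "correct j" "correct s" "(s, m) \<in> D j t" "valid_atom n (s, m)"
  shows "m = Vote gen \<or> (\<exists>t0 < t. (s, m) \<in> Out s t0)"
  using exec assms unfolding minimmit_exec_def sigs_def by blast

lemma lS_mono: "correct i \<Longrightarrow> t \<le> T \<Longrightarrow> lS (st i t) \<subseteq> lS (st i T)"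
  using lift_Suc_mono_le[of "\<lambda>t. lS (st i t)"] slot_lS_mono[OF slot_step] by blast

lemma lv_pos: "correct i \<Longrightarrow> 1 \<le> lv (st i T)"
proof (induction T)
  case 0
  then show ?case by (simp add: init init_state_def)
next
  case (Suc T)
  then show ?case
    using slot_lv_mono[OF slot_step[OF Suc.prems, of T]] by simp
qed

lemma valid_lS: "correct i \<Longrightarrow> \<forall>a \<in> lS (st i T). valid_atom n a"
proof (induction T)
  case 0
  then show ?case by (auto simp: init init_state_def valid_atom_def valid_block_def)
next
  case (Suc T)
  then show ?case
    using slot_valid[OF slot_step[OF Suc.prems] _ lv_pos[OF Suc.prems]] by simp
qed

lemma Out_in_lS: "correct i \<Longrightarrow> Out i t \<subseteq> lS (st i (Suc t))"
  using slot_Out_subset[OF slot_step valid_lS] by simp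

lemma delivered_in_signer_state:
  assumes "correct i" "correct j" "(j, m) \<in> D i T" "valid_atom n (j, m)"
  shows "m = Vote gen \<or> (j, m) \<in> lS (st j T)"
proof -
  have "(j, m) \<in> lS (st j T)" if "t0 < T" "(j, m) \<in> Out j t0" for t0
    using that Out_in_lS[OF assms(2)] lS_mono[OF assms(2), of "Suc t0" T] by auto
  then show ?thesis
    using delivered_sent[OF assms] by blast
qed

lemma known_in_signer_state:
  "correct i \<Longrightarrow> correct j \<Longrightarrow> (j, m) \<in> lS (st i T) \<Longrightarrow> m = Vote gen \<or> (j, m) \<in> lS (st j T)"
proof (induction T)
  case 0
  then show ?case by (auto simp: init init_state_def)
next
  case (Suc T)
  show ?case
  proof (cases "j = i")
    case False
    then have "(j, m) \<in> received n (D i T) (st i T)"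
      using slot_other_signer[OF slot_step] Suc.prems by blast
    then have "m = Vote gen \<or> (j, m) \<in> lS (st j T)"
      using Suc delivered_in_signer_state unfolding received_def by blast
    then show ?thesis
      using slot_lS_mono[OF slot_step] Suc.prems(2) by blast
  qed (use Suc.prems in simp)
qed

lemma received_in_signer_state:
  "correct i \<Longrightarrow> correct j \<Longrightarrow> (j, m) \<in> received n (D i T) (st i T) \<Longrightarrow>
    m = Vote gen \<or> (j, m) \<in> lS (st j T)"
  using known_in_signer_state delivered_in_signer_state unfolding received_def by blast

lemma correct_own_msgs_known: "correct i \<Longrightarrow> own_msgs_known n i (D i T) (st i T)"
  unfolding own_msgs_known_def using delivered_in_signer_state by blast

lemma correct_local_inv: "correct i \<Longrightarrow> local_inv i (st i T)"
proof (induction T)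
  case 0
  then show ?case by (auto simp: init local_inv_def init_state_def)
next
  case (Suc T)
  then show ?case using slot_local_inv[OF slot_step] correct_own_msgs_known by blast
qed

lemma correct_vote_unique:
  assumes "correct i" "(i, Vote b) \<in> lS (st i T)" "(i, Vote b') \<in> lS (st i T')"
    and "b \<noteq> gen" "b' \<noteq> gen" "bview b = bview b'"
  shows "b = b'"
proof -
  have "(i, Vote b) \<in> lS (st i (max T T'))" "(i, Vote b') \<in> lS (st i (max T T'))"
    using assms(2,3) lS_mono[OF assms(1)] by (meson max.cobounded1 max.cobounded2 subsetD)+
  then show ?thesis
    using local_invD(7)[OF correct_local_inv[OF assms(1)]] assms(4-6) by blast
qed

lemma no_vote_after_null:
  assumes "correct i" and "(i, Null w) \<in> lS (st i T)"
    and "\<forall>b. b \<noteq> gen \<and> bview b = w \<longrightarrow> (i, Vote b) \<notin> lS (st i T)" and "T \<le> T'"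
  shows "\<forall>b. b \<noteq> gen \<and> bview b = w \<longrightarrow> (i, Vote b) \<notin> lS (st i T')"
  using assms(4)
proof (induction T' rule: dec_induct)
  case base
  then show ?case using assms(3) .
next
  case (step m)
  show ?case
  proof (intro allI impI notI)
    fix b
    assume b: "b \<noteq> gen \<and> bview b = w" and voted: "(i, Vote b) \<in> lS (st i (Suc m))"
    have inv: "local_inv i (st i m)"
      using correct_local_inv[OF assms(1)] .
    have "(i, Null w) \<in> lS (st i m)"
      using assms(2) lS_mono[OF assms(1) step.hyps(1)] by blast
    then have "w \<le> lv (st i m)" "w = lv (st i m) \<Longrightarrow> lnull (st i m)"
      using local_invD(4,6)[OF inv] by auto
    moreover have "lv (st i m) \<le> bview b \<and> (bview b = lv (st i m) \<longrightarrow> \<not> lnull (st i m))"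
      using slot_new_own_vote_view[OF slot_step inv correct_own_msgs_known voted] step.IH b assms(1)
      by blast
    ultimately show False
      using b by linarith
  qed
qed

section \<open>L-notarized blocks\<close>

definition L_notarized :: "('t,'h) block \<Rightarrow> bool" where
  "L_notarized b \<longleftrightarrow> b \<noteq> gen \<and> (\<exists>p T. correct p \<and> hasL n f (lS (st p T)) b)"

definition correct_voters :: "('t,'h) block \<Rightarrow> nat set" where
  "correct_voters b = {j. correct j \<and> (\<exists>T. (j, Vote b) \<in> lS (st j T))}"

lemma received_valid: "correct i \<Longrightarrow> \<forall>a \<in> received n (D i T) (st i T). valid_atom n a"
  using valid_lS unfolding received_def by blast

lemma obtain_correct_member:
  assumes "Q \<subseteq> {..<n}" and "f < card Q"
  obtains j where "j \<in> Q" "correct j"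
proof -
  have "\<not> Q \<subseteq> Byz"
  proof
    assume "Q \<subseteq> Byz"
    then have "card Q \<le> card Byz"
      by (rule card_mono[OF finite_Byz])
    with card_Byz assms(2) show False
      by linarith
  qed
  with assms(1) that show thesis
    by blast
qed

lemma hasM_correct_voter:
  assumes "correct i" and "hasM f (received n (D i T) (st i T)) c" and "c \<noteq> gen"
  obtains j where "correct j" "(j, Vote c) \<in> lS (st j T)"
proof -
  obtain Q where Q: "Q \<subseteq> voters (received n (D i T) (st i T)) c" "card Q = 2*f+1"
    using assms(2) unfolding hasM_def by blast
  moreover have "Q \<subseteq> {..<n}"
    using Q(1) voters_bounded[OF received_valid[OF assms(1)]] by blast
  ultimately obtain j where "j \<in> Q" "correct j"
    by (elim obtain_correct_member) simp
  with Q(1) assms show thesis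
    using received_in_signer_state that unfolding voters_def by blast
qed

lemma L_notarized_view:
  assumes "L_notarized b"
  shows "1 \<le> bview b"
proof -
  obtain p T where p: "correct p" "hasL n f (lS (st p T)) b" and "b \<noteq> gen"
    using assms unfolding L_notarized_def by blast
  then obtain Q where "Q \<subseteq> voters (lS (st p T)) b" "card Q = n - f"
    unfolding hasL_def by blast
  moreover have "Q \<noteq> {}"
    using \<open>card Q = n - f\<close> n_bound by auto
  ultimately obtain j where "(j, Vote b) \<in> lS (st p T)"
    unfolding voters_def by blast
  then have "valid_block b"
    using valid_lS[OF p(1)] valid_atom_Vote_block by blast
  then show ?thesis
    using \<open>b \<noteq> gen\<close> by (rule valid_block_view)
qed

lemma card_correct_voters:
  assumes "L_notarized b"
  shows "n - 2*f \<le> card (correct_voters b)"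
proof -
  obtain p T Q where p: "correct p" and Q: "Q \<subseteq> voters (lS (st p T)) b" "card Q = n - f"
    and "b \<noteq> gen"
    using assms unfolding L_notarized_def hasL_def by blast
  have Q_bounded: "Q \<subseteq> {..<n}"
    using Q(1) voters_bounded[OF valid_lS[OF p]] by blast
  have "Q - Byz \<subseteq> correct_voters b"
  proof
    fix j
    assume "j \<in> Q - Byz"
    then have "correct j" "(j, Vote b) \<in> lS (st p T)"
      using Q_bounded Q(1) unfolding voters_def by auto
    with p \<open>b \<noteq> gen\<close> show "j \<in> correct_voters b"
      using known_in_signer_state unfolding correct_voters_def by blast
  qed
  then have "card (Q - Byz) \<le> card (correct_voters b)"
    by (rule card_mono[rotated]) (simp add: correct_voters_def)
  moreover have "card Q - card Byz \<le> card (Q - Byz)"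
    using diff_card_le_card_Diff[OF finite_Byz] .
  ultimately show ?thesis
    using Q(2) card_Byz by linarith
qed

lemma card_outside_correct_voters:
  assumes "L_notarized b" and "M \<subseteq> {..<n}" and "M \<inter> correct_voters b = {}"
  shows "card M \<le> 2*f"
proof -
  have bounded: "correct_voters b \<subseteq> {..<n}"
    unfolding correct_voters_def by auto
  then have "card (M \<union> correct_voters b) = card M + card (correct_voters b)"
    using assms(2,3) finite_subset[OF _ finite_lessThan] by (intro card_Un_disjoint) auto
  moreover have "card (M \<union> correct_voters b) \<le> n"
    using card_mono[of "{..<n}" "M \<union> correct_voters b"] assms(2) bounded by simp
  ultimately have "card M + card (correct_voters b) \<le> n"
    by simp
  then show ?thesis
    using card_correct_voters[OF assms(1)] n_bound by linarith
qed

(*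
  A correct voter of b never dissents from b: it does not nullify view(b) by hypothesis and votes
  only once per view. The at least n - 2f correct voters leave room for at most 2f dissenters.
*)
lemma few_dissenters:
  assumes "L_notarized b" and "correct i"
    and no_null: "\<forall>j \<in> correct_voters b. (j, Null (bview b)) \<notin> lS (st j T)"
    and "M \<subseteq> {..<n}" and "\<forall>j \<in> M. dissents (received n (D i T) (st i T)) b j"
  shows "card M \<le> 2*f"
proof -
  have "j \<notin> correct_voters b" if "j \<in> M" for j
  proof
    assume voter: "j \<in> correct_voters b"
    then obtain T' where "correct j" "(j, Vote b) \<in> lS (st j T')"
      unfolding correct_voters_def by blast
    from assms(5) that show False
      unfolding dissents_def
    proof (elim ballE disjE exE conjE)
      assume "(j, Null (bview b)) \<in> received n (D i T) (st i T)"
      from received_in_signer_state[OF assms(2) \<open>correct j\<close> this]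
      have "(j, Null (bview b)) \<in> lS (st j T)"
        by simp
      with no_null voter show False
        by blast
    next
      fix b'
      assume "b' \<noteq> b" "bview b' = bview b" "(j, Vote b') \<in> received n (D i T) (st i T)"
      moreover have "b \<noteq> gen" "b' \<noteq> gen"
        using L_notarized_view[OF assms(1)] \<open>bview b' = bview b\<close> by auto
      moreover note received_in_signer_state[OF assms(2) \<open>correct j\<close> \<open>(j, Vote b') \<in> received n (D i T) (st i T)\<close>]
      ultimately have "(j, Vote b') \<in> lS (st j T)"
        by simp
      then show False
        using correct_vote_unique[OF \<open>correct j\<close> _ \<open>(j, Vote b) \<in> lS (st j T')\<close>]
          \<open>b' \<noteq> b\<close> \<open>bview b' = bview b\<close> \<open>b \<noteq> gen\<close> \<open>b' \<noteq> gen\<close> by blast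
    qed blast
  qed
  then show ?thesis
    using card_outside_correct_voters[OF assms(1,4)] by blast
qed

(*
  A timeout nullification precedes any vote in the view, so a correct voter of b can only
  nullify view(b) in step (8), which needs 2f+1 dissenters.
*)
lemma correct_voters_never_nullify:
  assumes "L_notarized b"
  shows "\<forall>j \<in> correct_voters b. (j, Null (bview b)) \<notin> lS (st j T)"
proof (induction T)
  case 0
  show ?case by (auto simp: init init_state_def correct_voters_def)
next
  case (Suc T)
  show ?case
  proof (intro ballI notI)
    fix i
    assume voter: "i \<in> correct_voters b" and null: "(i, Null (bview b)) \<in> lS (st i (Suc T))"
    then obtain T1 where i: "correct i" and voted: "(i, Vote b) \<in> lS (st i T1)"
      unfolding correct_voters_def by blast
    have "b \<noteq> gen"
      using assms unfolding L_notarized_def by blast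
    have "(i, Null (bview b)) \<notin> lS (st i T)"
      using Suc.IH voter by blast
    from slot_new_null_justified[OF slot_step[OF i] correct_local_inv[OF i]
        correct_own_msgs_known[OF i] valid_lS[OF i] null this]
    show False
    proof (elim disjE exE conjE)
      assume "\<forall>b'. b' \<noteq> gen \<and> bview b' = bview b \<longrightarrow> (i, Vote b') \<notin> lS (st i (Suc T))"
      then have "(i, Vote b) \<notin> lS (st i (max T1 (Suc T)))"
        using no_vote_after_null[OF i null _ max.cobounded2] \<open>b \<noteq> gen\<close> by blast
      moreover have "(i, Vote b) \<in> lS (st i (max T1 (Suc T)))"
        using voted lS_mono[OF i] by (meson max.cobounded1 subsetD)
      ultimately show False
        by blast
    next
      fix b'' M
      assume "b'' \<noteq> gen" "bview b'' = bview b" "(i, Vote b'') \<in> lS (st i (Suc T))"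
        and M: "2*f+1 \<le> card M" "M \<subseteq> {..<n}" "\<forall>j \<in> M. dissents (received n (D i T) (st i T)) b'' j"
      then have "b'' = b"
        using correct_vote_unique[OF i _ voted _ \<open>b \<noteq> gen\<close>] by blast
      with M(3) have "card M \<le> 2*f"
        using few_dissenters[OF assms i Suc.IH M(2)] by simp
      with M(1) show False
        by linarith
    qed
  qed
qed

lemma L_notarized_no_nullification:
  assumes "L_notarized b" and "correct p"
  shows "\<not> hasNull f (lS (st p T)) (bview b)"
proof
  assume "hasNull f (lS (st p T)) (bview b)"
  then obtain Q where Q: "Q \<subseteq> nullers (lS (st p T)) (bview b)" "card Q = 2*f+1"
    unfolding hasNull_def by blast
  have "\<forall>j \<in> Q. dissents (received n (D p T) (st p T)) b j"
    using Q(1) lS_subset_received unfolding nullers_def dissents_def by blast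
  moreover have "Q \<subseteq> {..<n}"
    using Q(1) nullers_bounded[OF valid_lS[OF assms(2)]] by blast
  ultimately have "card Q \<le> 2*f"
    using few_dissenters[OF assms correct_voters_never_nullify[OF assms(1)]] by blast
  with Q(2) show False
    by linarith
qed

lemma L_notarized_unique_hasM:
  assumes "L_notarized b" and "correct p" and "hasM f (received n (D p T) (st p T)) b'"
    and "bview b' = bview b"
  shows "b' = b"
proof (rule ccontr)
  assume "b' \<noteq> b"
  obtain Q where Q: "Q \<subseteq> voters (received n (D p T) (st p T)) b'" "card Q = 2*f+1"
    using assms(3) unfolding hasM_def by blast
  have "\<forall>j \<in> Q. dissents (received n (D p T) (st p T)) b j"
    using Q(1) \<open>b' \<noteq> b\<close> assms(4) unfolding voters_def dissents_def by blast
  moreover have "Q \<subseteq> {..<n}"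
    using Q(1) voters_bounded[OF received_valid[OF assms(2)]] by blast
  ultimately have "card Q \<le> 2*f"
    using few_dissenters[OF assms(1,2) correct_voters_never_nullify[OF assms(1)]] by blast
  with Q(2) show False
    by linarith
qed

lemma L_notarized_ancestor_of_later_votes:
  assumes "L_notarized b"
  shows "correct j \<Longrightarrow> (j, Vote c) \<in> lS (st j T) \<Longrightarrow> bview b < bview c \<Longrightarrow> b \<in> anc H c"
proof (induction T arbitrary: j c)
  case 0
  then show ?case by (auto simp: init init_state_def)
next
  case (Suc T)
  have "c \<noteq> gen"
    using Suc.prems(3) by auto
  have M_notarized_descends: "b \<in> anc H p"
    if "hasM f (received n (D j T) (st j T)) p" "bview b < bview p" for p
  proof -
    have "p \<noteq> gen"
      using that(2) by auto
    with that(1) obtain k where "correct k" "(k, Vote p) \<in> lS (st k T)"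
      by (elim hasM_correct_voter[OF Suc.prems(1)])
    then show ?thesis
      using that(2) by (rule Suc.IH)
  qed
  from slot_own_vote_justified[OF slot_step[OF Suc.prems(1)] Suc.prems(2) lv_pos[OF Suc.prems(1)]]
  show ?case
  proof (elim disjE exE conjE)
    assume "(j, Vote c) \<in> received n (D j T) (st j T)"
    from received_in_signer_state[OF Suc.prems(1,1) this] \<open>c \<noteq> gen\<close>
    have "(j, Vote c) \<in> lS (st j T)"
      by simp
    then show ?thesis
      using Suc.IH Suc.prems(1,3) by blast
  next
    assume "hasM f (received n (D j T) (st j T)) c"
    then show ?thesis
      using Suc.prems(3) by (rule M_notarized_descends)
  next
    fix p
    assume parent: "bh c = Some (H p)" and M: "hasM f (received n (D j T) (st j T)) p"
      and nulls: "\<forall>u. bview p < u \<and> u < bview c \<longrightarrow> hasNull f (lS (st j (Suc T))) u"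
    have "p \<in> anc H c"
      using anc.parent[OF anc.self[of c H] \<open>c \<noteq> gen\<close> parent] .
    consider "bview p < bview b" | "bview p = bview b" | "bview b < bview p"
      by linarith
    then show ?thesis
    proof cases
      case 1
      then show ?thesis
        using nulls Suc.prems(3) L_notarized_no_nullification[OF assms Suc.prems(1)] by blast
    next
      case 2
      then have "p = b"
        using L_notarized_unique_hasM[OF assms Suc.prems(1) M] by blast
      with \<open>p \<in> anc H c\<close> show ?thesis
        by simp
    next
      case 3
      then show ?thesis
        using M_notarized_descends[OF M] \<open>p \<in> anc H c\<close> anc_trans by blast
    qed
  qed
qed

lemma L_notarized_ancestor:
  assumes "L_notarized b" and "L_notarized c" and "bview b \<le> bview c"
  shows "b \<in> anc H c"
proof -
  obtain p T where p: "correct p" and L: "hasL n f (lS (st p T)) c" and "c \<noteq> gen"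
    using assms(2) unfolding L_notarized_def by blast
  show ?thesis
  proof (cases "bview b = bview c")
    case True
    have "hasM f (received n (D p T) (st p T)) c"
      using hasL_imp_hasM[OF L] n_bound hasM_mono[OF lS_subset_received] by simp
    then have "c = b"
      using L_notarized_unique_hasM[OF assms(1) p] True by simp
    then show ?thesis
      by (simp add: anc.self)
  next
    case False
    obtain Q where Q: "Q \<subseteq> voters (lS (st p T)) c" "card Q = n - f"
      using L unfolding hasL_def by blast
    moreover have "Q \<subseteq> {..<n}"
      using Q(1) voters_bounded[OF valid_lS[OF p]] by blast
    moreover have "f < card Q"
      using Q(2) n_bound by linarith
    ultimately obtain j where "j \<in> Q" "correct j"
      by (elim obtain_correct_member)
    with Q(1) have "(j, Vote c) \<in> lS (st p T)"
      unfolding voters_def by blast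
    from known_in_signer_state[OF p \<open>correct j\<close> this] \<open>c \<noteq> gen\<close>
    have "(j, Vote c) \<in> lS (st j T)"
      by simp
    with \<open>correct j\<close> show ?thesis
      using L_notarized_ancestor_of_later_votes[OF assms(1)] False assms(3) by simp
  qed
qed

definition finalised_log :: "'t list \<Rightarrow> bool" where
  "finalised_log L \<longleftrightarrow>
     L = [] \<or> (\<exists>b bs. L_notarized b \<and> hash_chain H b bs \<and> L = dedup (concat (map btr bs)))"

lemma finalised_logs_compatible:
  assumes "finalised_log L1" and "finalised_log L2"
  shows "prefix L1 L2 \<or> prefix L2 L1"
proof (cases "L1 = [] \<or> L2 = []")
  case False
  then obtain b1 bs1 b2 bs2 where
    b1: "L_notarized b1" "hash_chain H b1 bs1" "L1 = dedup (concat (map btr bs1))" and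
    b2: "L_notarized b2" "hash_chain H b2 bs2" "L2 = dedup (concat (map btr bs2))"
    using assms unfolding finalised_log_def by blast
  have log_prefix: "prefix (dedup (concat (map btr bs))) (dedup (concat (map btr bs')))"
    if "prefix bs bs'" for bs bs' :: "('t,'h) block list"
    using that by (intro dedup_mono_prefix concat_mono_prefix map_mono_prefix)
  show ?thesis
  proof (cases "bview b1 \<le> bview b2")
    case True
    then have "prefix bs1 bs2"
      using anc_hash_chain_prefix[OF inj_H L_notarized_ancestor[OF b1(1) b2(1)] b2(2) b1(2)] by simp
    then show ?thesis
      using log_prefix b1(3) b2(3) by simp
  next
    case False
    then have "prefix bs2 bs1"
      using anc_hash_chain_prefix[OF inj_H L_notarized_ancestor[OF b2(1) b1(1)] b1(2) b2(2)] by simp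
    then show ?thesis
      using log_prefix b1(3) b2(3) by simp
  qed
qed auto

lemma finalised_log_fold:
  assumes "\<forall>b \<in> set fo. \<exists>c bs. L_notarized c \<and> hash_chain H c bs \<and> chain_log H S b = dedup (concat (map btr bs))"
  shows "finalised_log L \<Longrightarrow> finalised_log (fold (\<lambda>b L. fin_update (chain_log H S b) L) fo L)"
  using assms
proof (induction fo arbitrary: L)
  case (Cons b fo)
  then have "finalised_log (chain_log H S b)"
    unfolding finalised_log_def by simp
  then have "finalised_log (fin_update (chain_log H S b) L)"
    using Cons.prems(1) unfolding fin_update_def by simp
  then show ?case
    using Cons.IH Cons.prems(2) by simp
qed simp

lemma hasL_gen: "correct i \<Longrightarrow> hasL n f (lS (st i T)) gen"
proof -
  assume i: "correct i"
  have "{..<n-f} \<subseteq> voters (lS (st i T)) gen"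
    using lS_mono[OF i, of 0 T] init[OF i] unfolding init_state_def voters_def by auto
  then show ?thesis
    unfolding hasL_def by (metis card_lessThan)
qed

lemma pending_L_notarized: "correct i \<Longrightarrow> \<forall>b \<in> lpend (st i T). b \<noteq> gen \<and> hasL n f (lS (st i T)) b"
proof (induction T)
  case 0
  then show ?case by (simp add: init init_state_def)
next
  case (Suc T)
  then show ?case
    using slot_pending[OF slot_step[OF Suc.prems] Suc.IH[OF Suc.prems] hasL_gen[OF Suc.prems]] by blast
qed

lemma llog_finalised: "correct i \<Longrightarrow> finalised_log (llog (st i T))"
proof (induction T)
  case 0
  then show ?case by (simp add: init init_state_def finalised_log_def)
next
  case (Suc T)
  let ?S = "lS (st i (Suc T))"
  obtain fo where fo: "\<forall>b \<in> set fo. b \<noteq> gen \<and> hasL n f ?S b \<and> (\<exists>bs. fchain H ?S b bs)"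
    "llog (st i (Suc T)) = fold (\<lambda>b L. fin_update (chain_log H ?S b) L) fo (llog (st i T))"
    using slot_llog[OF slot_step[OF Suc.prems] pending_L_notarized[OF Suc.prems] hasL_gen[OF Suc.prems]]
    by blast
  have "\<exists>c bs. L_notarized c \<and> hash_chain H c bs \<and> chain_log H ?S b = dedup (concat (map btr bs))"
    if b: "b \<in> set fo" for b
  proof -
    obtain bs where "b \<noteq> gen" "hasL n f ?S b" and chain: "fchain H ?S b bs"
      using fo(1) b by blast
    have "L_notarized b"
      unfolding L_notarized_def using Suc.prems \<open>b \<noteq> gen\<close> \<open>hasL n f ?S b\<close> by blast
    then show ?thesis
      using chain_log_eq[OF inj_H chain] fchain_hash_chain[OF chain] by blast
  qed
  then have "\<forall>b \<in> set fo. \<exists>c bs. L_notarized c \<and> hash_chain H c bs \<and>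
      chain_log H ?S b = dedup (concat (map btr bs))"
    by blast
  from finalised_log_fold[OF this Suc.IH[OF Suc.prems]] show ?case
    unfolding fo(2) .
qed

end

theorem lemma4:
  fixes H :: "('t::linorder,'h::linorder) block \<Rightarrow> 'h"
  assumes "minimmit_exec n f \<Delta> GST H Byz D X Out st"
    and "i < n" and "i \<notin> Byz" and "j < n" and "j \<notin> Byz"
  shows "prefix (llog (st i (Suc t))) (llog (st j (Suc t'))) \<or>
         prefix (llog (st j (Suc t'))) (llog (st i (Suc t)))"
proof -
  interpret minimmit_execution n f \<Delta> GST H Byz D X Out st
    using assms(1) by unfold_locales
  have "finalised_log (llog (st i (Suc t)))" "finalised_log (llog (st j (Suc t')))"
    using llog_finalised assms(2-5) by simp_all
  then show ?thesis
    by (rule finalised_logs_compatible)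
qed

end
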